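(* Let $\omega\in S_n$ and $1\le i<j\le n$ with $c_i(\omega),c_j(\omega)>0$, and let $a\in[c_i(\omega)]$, $b\in[c_j(\omega)]$ with $m_{i,a}(\omega)>m_{j,b}(\omega)$. (1) If $a,b\ge 2$, then $m_{i,a-1}(\omega)>m_{j,b-1}(\omega)$. (2) If $a<c_i(\omega)$ and $b<c_j(\omega)$, then $m_{i,a+1}(\omega)>m_{j,b+1}(\omega)$.
   Context: Permutations $\omega\in S_n$ are written in one-line notation. Let ${\rm Inv}(\omega)=\{(i,j): 1\le i<j\le n,\ \omega(i)>\omega(j)\}$, $c_i(\omega)=\#\{j: i<j\le n,\ \omega(i)>\omega(j)\}$, and for $i<j$, $c_{i,j}(\omega)=\#\{k: i<k<j,\ \omega(i)>\omega(k)\}$; $[m]=\{1,\dots,m\}$. For $i$ with $c_i(\omega)>0$ and $x\in[c_i(\omega)]$, $m_{i,x}(\omega)\in\mathbb{N}^n$ has $j$-th coordinate $0$ if $j<i$; $x$ if $j=i$; $0$ if $j>i$ and $(i,j)\in{\rm Inv}(\omega)$; $\max\{0,x-c_{i,j}(\omega)\}$ if $j>i$ and $(i,j)\notin{\rm Inv}(\omega)$. Comparisons $<,>$ are strict comparisons in the product order on $\mathbb{N}^n$ ($u\le v$ iff $u_k\le v_k$ for all $k$). *)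

theory Defs
  imports "HOL-Combinatorics.Permutations"
begin

text \<open>Permutations of [n] = {1..n}, vectors in N^n are functions nat => nat
  whose coordinates 1..n are relevant.\<close>

definition inv_set :: "nat \<Rightarrow> (nat \<Rightarrow> nat) \<Rightarrow> (nat \<times> nat) set" where
  "inv_set n w = {(i,j). 1 \<le> i \<and> i < j \<and> j \<le> n \<and> w i > w j}"

definition code :: "nat \<Rightarrow> (nat \<Rightarrow> nat) \<Rightarrow> nat \<Rightarrow> nat" where
  "code n w i = card {j. i < j \<and> j \<le> n \<and> w i > w j}"

definition code_between :: "(nat \<Rightarrow> nat) \<Rightarrow> nat \<Rightarrow> nat \<Rightarrow> nat" where
  "code_between w i j = card {k. i < k \<and> k < j \<and> w i > w k}"

definition mvec :: "nat \<Rightarrow> (nat \<Rightarrow> nat) \<Rightarrow> nat \<Rightarrow> nat \<Rightarrow> (nat \<Rightarrow> nat)" where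
  "mvec n w i x = (\<lambda>j. if j < i then 0
                        else if j = i then x
                        else if (i,j) \<in> inv_set n w then 0
                        else x - code_between w i j)"

definition vle :: "nat \<Rightarrow> (nat \<Rightarrow> nat) \<Rightarrow> (nat \<Rightarrow> nat) \<Rightarrow> bool" where
  "vle n u v = (\<forall>k\<in>{1..n}. u k \<le> v k)"

definition vless :: "nat \<Rightarrow> (nat \<Rightarrow> nat) \<Rightarrow> (nat \<Rightarrow> nat) \<Rightarrow> bool" where
  "vless n u v = (vle n u v \<and> (\<exists>k\<in>{1..n}. u k \<noteq> v k))"

end

theory Submission
  imports Defs
begin

(* For positions i < j in [n] and y > 0 the comparison of the
   vectors m_{j,y} and m_{i,x} in the product order is governed by a single
   arithmetic condition:
       m_{j,y} < m_{i,x}   iff   (i,j) is not an inversion and c_{i,j} + y <= x.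
   Necessity is read off at coordinate j, where m_{j,y} has entry y.
   Sufficiency is checked coordinatewise; beyond j it rests on the
   subadditivity c_{i,k} <= c_{i,j} + c_{j,k}, valid when w(i) <= w(j).
   Strictness is witnessed at coordinate i, where m_{j,y} vanishes.
   The theorem follows because the condition is invariant under replacing
   (x,y) by (x-1,y-1) or (x+1,y+1), as long as y stays positive. *)

text \<open>Counting the values below \<open>w i\<close> between \<open>i\<close> and \<open>k\<close>: when \<open>w i \<le> w j\<close>
  for an intermediate \<open>j\<close>, every such value past \<open>j\<close> is also below \<open>w j\<close>.\<close>
lemma code_between_subadditive:
  assumes "i < j" "j < k" "w i \<le> w j"
  shows "code_between w i k \<le> code_between w i j + code_between w j k"
proof -
  let ?A = "{l. i < l \<and> l < j \<and> w l < w i}" and ?B = "{l. j < l \<and> l < k \<and> w l < w j}"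
  have "{l. i < l \<and> l < k \<and> w l < w i} \<subseteq> ?A \<union> ?B"
    using assms by (auto simp: not_less_iff_gr_or_eq)
  hence "card {l. i < l \<and> l < k \<and> w l < w i} \<le> card (?A \<union> ?B)"
    by (intro card_mono) auto
  also have "\<dots> \<le> card ?A + card ?B"
    by (rule card_Un_le)
  finally show ?thesis unfolding code_between_def .
qed

lemma mvec_le_mvec:
  assumes "1 \<le> i" "i < j" "j \<le> n" "(i, j) \<notin> inv_set n w"
    and "code_between w i j + y \<le> x"
  shows "mvec n w j y k \<le> mvec n w i x k"
proof -
  have wij: "w i \<le> w j" using assms(1-4) by (auto simp: inv_set_def)
  consider "k < j" | "k = j" | "j < k" by linarith
  then show ?thesis
  proof cases
    case 3
    show ?thesis
    proof (cases "(j, k) \<in> inv_set n w \<or> y \<le> code_between w j k")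
      case True
      then show ?thesis using 3 assms(2) by (auto simp: mvec_def)
    next
      case False
      text \<open>An inversion \<open>(i,k)\<close> would give \<open>w k < w i \<le> w j\<close>, an inversion \<open>(j,k)\<close>.\<close>
      then have "(i, k) \<notin> inv_set n w"
        using 3 assms(1,2) wij by (auto simp: inv_set_def)
      with code_between_subadditive[OF assms(2) 3 wij] show ?thesis
        using False 3 assms(2,5) by (simp add: mvec_def)
    qed
  qed (use assms in \<open>auto simp: mvec_def\<close>)
qed

lemma mvec_le_at_j:
  assumes "1 \<le> i" "i < j" "j \<le> n" "0 < y"
    and "mvec n w j y j \<le> mvec n w i x j"
  shows "(i, j) \<notin> inv_set n w \<and> code_between w i j + y \<le> x"
  using assms by (auto simp: mvec_def split: if_splits)

lemma vless_mvec_iff: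
  assumes "1 \<le> i" "i < j" "j \<le> n" "0 < y"
  shows "vless n (mvec n w j y) (mvec n w i x)
     \<longleftrightarrow> (i, j) \<notin> inv_set n w \<and> code_between w i j + y \<le> x"
proof
  assume "vless n (mvec n w j y) (mvec n w i x)"
  then have "mvec n w j y j \<le> mvec n w i x j"
    using assms unfolding vless_def vle_def by auto
  then show "(i, j) \<notin> inv_set n w \<and> code_between w i j + y \<le> x"
    using mvec_le_at_j assms by blast
next
  assume cond: "(i, j) \<notin> inv_set n w \<and> code_between w i j + y \<le> x"
  have dominated: "vle n (mvec n w j y) (mvec n w i x)"
    using mvec_le_mvec[OF assms(1-3)] cond by (simp add: vle_def)
  text \<open>Coordinate \<open>i\<close> separates the vectors: \<open>m_{j,y}\<close> vanishes there, \<open>m_{i,x}\<close> equals \<open>x > 0\<close>.\<close>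
  have "mvec n w j y i \<noteq> mvec n w i x i" and "i \<in> {1..n}"
    using cond assms by (auto simp: mvec_def)
  then show "vless n (mvec n w j y) (mvec n w i x)"
    using dominated unfolding vless_def by blast
qed

theorem mainTheorem3:
  fixes n :: nat and w :: "nat \<Rightarrow> nat" and i j a b :: nat
  assumes "w permutes {1..n}"
    and "1 \<le> i" "i < j" "j \<le> n"
    and "code n w i > 0" "code n w j > 0"
    and "a \<in> {1..code n w i}" "b \<in> {1..code n w j}"
    and "vless n (mvec n w j b) (mvec n w i a)"
  shows "(a \<ge> 2 \<and> b \<ge> 2 \<longrightarrow> vless n (mvec n w j (b - 1)) (mvec n w i (a - 1)))
       \<and> (a < code n w i \<and> b < code n w j \<longrightarrow> vless n (mvec n w j (b + 1)) (mvec n w i (a + 1)))"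
proof -
  have "b > 0" using assms(8) by simp
  then have cond: "(i, j) \<notin> inv_set n w \<and> code_between w i j + b \<le> a"
    using vless_mvec_iff assms(2-4,9) by blast
  have down: "vless n (mvec n w j (b - 1)) (mvec n w i (a - 1))" if "b \<ge> 2"
    using vless_mvec_iff[of i j n "b - 1"] assms(2-4) cond that by auto
  have up: "vless n (mvec n w j (b + 1)) (mvec n w i (a + 1))"
    using vless_mvec_iff[of i j n "b + 1"] assms(2-4) cond by auto
  show ?thesis using down up by blast
qed

end
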